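(* Let $M=(\mathbf{K}^{\mathbf{n}},\rho)$ be a sum-matroid with nullity function $\eta(\mathcal{L})=\mathrm{Rk}(\mathcal{L})-\rho(\mathcal{L})$. Then for every $i\in\{1,\dots,\eta(\mathbf{K}^{\mathbf{n}})\}$, $$\min\{\mathrm{Rk}(\mathcal{L}):\mathcal{L}\in\mathcal{P}(\mathbf{K}^{\mathbf{n}}),\ \eta(\mathcal{L})=i\}=\min\{\mathrm{Rk}(\mathcal{L}):\mathcal{L}\in\mathcal{P}(\mathbf{K}^{\mathbf{n}}),\ \eta(\mathcal{L})\ge i\}.$$
   Context: $\ell,n_1,\dots,n_\ell$ positive integers, $K_1,\dots,K_\ell$ finite fields. $\mathcal{P}(\mathbf{K}^{\mathbf{n}})=\mathcal{P}(K_1^{n_1})\times\cdots\times\mathcal{P}(K_\ell^{n_\ell})$, $\mathcal{P}(K_i^{n_i})$ the lattice of $K_i$-subspaces of $K_i^{n_i}$, with componentwise inclusion, sum $+$ and intersection $\cap$; $\mathrm{Rk}(\mathcal{L})=\sum_i\dim_{K_i}\mathcal{L}_i$; $\mathbf{K}^{\mathbf{n}}=(K_1^{n_1},\dots,K_\ell^{n_\ell})$. A sum-matroid is a pair $(\mathbf{K}^{\mathbf{n}},\rho)$ with $\rho:\mathcal{P}(\mathbf{K}^{\mathbf{n}})\to\mathbb{Z}_{\ge0}$ satisfying for all $\mathcal{L},\mathcal{L}'$: (R1) $0\le\rho(\mathcal{L})\le\mathrm{Rk}(\mathcal{L})$; (R2) $\mathcal{L}\subseteq\mathcal{L}'\Rightarrow\rho(\mathcal{L})\le\rho(\mathcal{L}')$;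 (R3) $\rho(\mathcal{L}+\mathcal{L}')+\rho(\mathcal{L}\cap\mathcal{L}')\le\rho(\mathcal{L})+\rho(\mathcal{L}')$. *)

theory Defs
  imports "HOL-Algebra.Ring"
begin

text \<open>Vectors of K^n are represented as functions nat => 'a that are zero outside {..<n}.
  A family of finite fields K_0,...,K_(l-1) is given as HOL-Algebra rings over a common
  carrier type; index i ranges over {..<l} (0-based).\<close>

definition Vs :: "('a, 'b) ring_scheme \<Rightarrow> nat \<Rightarrow> (nat \<Rightarrow> 'a) set" where
  "Vs K n = {v. (\<forall>j<n. v j \<in> carrier K) \<and> (\<forall>j\<ge>n. v j = \<zero>\<^bsub>K\<^esub>)}"

definition vadd :: "('a, 'b) ring_scheme \<Rightarrow> (nat \<Rightarrow> 'a) \<Rightarrow> (nat \<Rightarrow> 'a) \<Rightarrow> (nat \<Rightarrow> 'a)" where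
  "vadd K u v = (\<lambda>j. u j \<oplus>\<^bsub>K\<^esub> v j)"

definition vsmult :: "('a, 'b) ring_scheme \<Rightarrow> 'a \<Rightarrow> (nat \<Rightarrow> 'a) \<Rightarrow> (nat \<Rightarrow> 'a)" where
  "vsmult K c v = (\<lambda>j. c \<otimes>\<^bsub>K\<^esub> v j)"

definition vzero :: "('a, 'b) ring_scheme \<Rightarrow> (nat \<Rightarrow> 'a)" where
  "vzero K = (\<lambda>j. \<zero>\<^bsub>K\<^esub>)"

definition subspace_of :: "('a, 'b) ring_scheme \<Rightarrow> nat \<Rightarrow> (nat \<Rightarrow> 'a) set \<Rightarrow> bool" where
  "subspace_of K n U \<longleftrightarrow> U \<subseteq> Vs K n \<and> vzero K \<in> U
     \<and> (\<forall>u\<in>U. \<forall>v\<in>U. vadd K u v \<in> U)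
     \<and> (\<forall>c\<in>carrier K. \<forall>v\<in>U. vsmult K c v \<in> U)"

definition lincomb :: "('a, 'b) ring_scheme \<Rightarrow> 'a list \<Rightarrow> (nat \<Rightarrow> 'a) list \<Rightarrow> (nat \<Rightarrow> 'a)" where
  "lincomb K cs vs = (\<lambda>j. finsum K (\<lambda>k. (cs ! k) \<otimes>\<^bsub>K\<^esub> ((vs ! k) j)) {..<length vs})"

definition lin_indep :: "('a, 'b) ring_scheme \<Rightarrow> (nat \<Rightarrow> 'a) list \<Rightarrow> bool" where
  "lin_indep K vs \<longleftrightarrow> (\<forall>cs. length cs = length vs \<and> set cs \<subseteq> carrier K
       \<and> lincomb K cs vs = vzero K \<longrightarrow> (\<forall>c\<in>set cs. c = \<zero>\<^bsub>K\<^esub>))"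

definition vdim :: "('a, 'b) ring_scheme \<Rightarrow> (nat \<Rightarrow> 'a) set \<Rightarrow> nat" where
  "vdim K U = Max {length vs | vs. set vs \<subseteq> U \<and> lin_indep K vs}"

text \<open>The lattice P(K^n): tuples (L_0,...,L_(l-1)) of subspaces, padded with {} beyond l.\<close>
definition Psp :: "nat \<Rightarrow> (nat \<Rightarrow> ('a, 'b) ring_scheme) \<Rightarrow> (nat \<Rightarrow> nat) \<Rightarrow> (nat \<Rightarrow> (nat \<Rightarrow> 'a) set) set" where
  "Psp l K n = {L. (\<forall>i<l. subspace_of (K i) (n i) (L i)) \<and> (\<forall>i\<ge>l. L i = {})}"

definition Ltop :: "nat \<Rightarrow> (nat \<Rightarrow> ('a, 'b) ring_scheme) \<Rightarrow> (nat \<Rightarrow> nat) \<Rightarrow> (nat \<Rightarrow> (nat \<Rightarrow> 'a) set)" where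
  "Ltop l K n = (\<lambda>i. if i < l then Vs (K i) (n i) else {})"

definition Lsum :: "(nat \<Rightarrow> ('a, 'b) ring_scheme) \<Rightarrow> (nat \<Rightarrow> (nat \<Rightarrow> 'a) set) \<Rightarrow> (nat \<Rightarrow> (nat \<Rightarrow> 'a) set) \<Rightarrow> (nat \<Rightarrow> (nat \<Rightarrow> 'a) set)" where
  "Lsum K L L' = (\<lambda>i. {vadd (K i) u v | u v. u \<in> L i \<and> v \<in> L' i})"

definition Linter :: "(nat \<Rightarrow> (nat \<Rightarrow> 'a) set) \<Rightarrow> (nat \<Rightarrow> (nat \<Rightarrow> 'a) set) \<Rightarrow> (nat \<Rightarrow> (nat \<Rightarrow> 'a) set)" where
  "Linter L L' = (\<lambda>i. L i \<inter> L' i)"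

definition Lsubseteq :: "nat \<Rightarrow> (nat \<Rightarrow> (nat \<Rightarrow> 'a) set) \<Rightarrow> (nat \<Rightarrow> (nat \<Rightarrow> 'a) set) \<Rightarrow> bool" where
  "Lsubseteq l L L' \<longleftrightarrow> (\<forall>i<l. L i \<subseteq> L' i)"

definition Rk :: "nat \<Rightarrow> (nat \<Rightarrow> ('a, 'b) ring_scheme) \<Rightarrow> (nat \<Rightarrow> (nat \<Rightarrow> 'a) set) \<Rightarrow> nat" where
  "Rk l K L = (\<Sum>i<l. vdim (K i) (L i))"

definition sum_matroid :: "nat \<Rightarrow> (nat \<Rightarrow> ('a, 'b) ring_scheme) \<Rightarrow> (nat \<Rightarrow> nat)
    \<Rightarrow> ((nat \<Rightarrow> (nat \<Rightarrow> 'a) set) \<Rightarrow> nat) \<Rightarrow> bool" where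
  "sum_matroid l K n rho \<longleftrightarrow>
     0 < l \<and> (\<forall>i<l. 0 < n i \<and> field (K i) \<and> finite (carrier (K i)))
     \<and> (\<forall>L\<in>Psp l K n. rho L \<le> Rk l K L)
     \<and> (\<forall>L\<in>Psp l K n. \<forall>L'\<in>Psp l K n. Lsubseteq l L L' \<longrightarrow> rho L \<le> rho L')
     \<and> (\<forall>L\<in>Psp l K n. \<forall>L'\<in>Psp l K n.
          rho (Lsum K L L') + rho (Linter L L') \<le> rho L + rho L')"

definition nullity :: "nat \<Rightarrow> (nat \<Rightarrow> ('a, 'b) ring_scheme) \<Rightarrow> ((nat \<Rightarrow> (nat \<Rightarrow> 'a) set) \<Rightarrow> nat)
    \<Rightarrow> (nat \<Rightarrow> (nat \<Rightarrow> 'a) set) \<Rightarrow> nat" where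
  "nullity l K rho L = Rk l K L - rho L"

end

(* Choose L of minimal rank among the L with nullity at least i. If its nullity exceeded i,
   then Rk L > 0 and cutting a nonzero component L_k down by a coordinate hyperplane gives
   L' \<subseteq> L with Rk L' = Rk L - 1; since rho L' \<le> rho L, the nullity drops by at most one,
   so L' still has nullity at least i, contradicting minimality. That a coordinate hyperplane
   has codimension one is seen by counting: over a field with q elements, a subspace of
   dimension d has exactly q^d elements. *)

theory Submission
  imports Defs
begin

lemma Min_level_eq_Min_superlevel:
  fixes r \<eta> :: "'x \<Rightarrow> nat"
  assumes "finite S" and "L \<in> S" and "i \<le> \<eta> L"
    and descend: "\<And>L. L \<in> S \<Longrightarrow> i < \<eta> L \<Longrightarrow> \<exists>L'\<in>S. r L' < r L \<and> i \<le> \<eta> L'"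
  shows "Min {r L | L. L \<in> S \<and> \<eta> L = i} = Min {r L | L. L \<in> S \<and> \<eta> L \<ge> i}"
proof -
  let ?A = "{r L | L. L \<in> S \<and> \<eta> L = i}" and ?B = "{r L | L. L \<in> S \<and> \<eta> L \<ge> i}"
  have "?B \<subseteq> r ` S" by auto
  then have "finite ?B" using \<open>finite S\<close> finite_subset by blast
  moreover have "?B \<noteq> {}" using assms(2,3) by blast
  ultimately have "Min ?B \<in> ?B" by (rule Min_in)
  then obtain L0 where L0: "L0 \<in> S" "i \<le> \<eta> L0" "r L0 = Min ?B" by auto
  have "\<eta> L0 = i"
  proof (rule ccontr)
    assume "\<eta> L0 \<noteq> i"
    with L0 have "i < \<eta> L0" by simp
    then obtain L' where "L' \<in> S" "r L' < r L0" "i \<le> \<eta> L'"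
      using descend L0(1) by blast
    then have "r L' \<in> ?B" by blast
    then show False using Min_le[OF \<open>finite ?B\<close>] L0(3) \<open>r L' < r L0\<close> by fastforce
  qed
  then have "Min ?B \<in> ?A" unfolding L0(3)[symmetric] using L0(1) by blast
  moreover have "?A \<subseteq> ?B" by auto
  moreover have "finite ?A" using \<open>finite ?B\<close> \<open>?A \<subseteq> ?B\<close> finite_subset by blast
  ultimately show ?thesis
    using \<open>finite ?B\<close> Min_antimono[of ?A ?B] Min_le[of ?A "Min ?B"] by fastforce
qed

definition span :: "('a, 'b) ring_scheme \<Rightarrow> (nat \<Rightarrow> 'a) list \<Rightarrow> (nat \<Rightarrow> 'a) set" where
  "span K vs = {lincomb K cs vs | cs. length cs = length vs \<and> set cs \<subseteq> carrier K}"

context ring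
begin

lemma Vs_carrier: "v \<in> Vs R n \<Longrightarrow> v j \<in> carrier R"
  unfolding Vs_def by (cases "j < n") auto

lemma vzero_in_Vs [simp]: "vzero R \<in> Vs R n"
  unfolding Vs_def vzero_def by auto

lemma vadd_in_Vs [simp]: "u \<in> Vs R n \<Longrightarrow> v \<in> Vs R n \<Longrightarrow> vadd R u v \<in> Vs R n"
  unfolding Vs_def vadd_def by auto

lemma vsmult_in_Vs [simp]: "c \<in> carrier R \<Longrightarrow> v \<in> Vs R n \<Longrightarrow> vsmult R c v \<in> Vs R n"
  unfolding Vs_def vsmult_def by auto

lemma vsmult_zero [simp]: "v \<in> Vs R n \<Longrightarrow> vsmult R \<zero> v = vzero R"
  by (rule ext) (simp add: vsmult_def vzero_def Vs_carrier)

lemma vadd_vzero_left [simp]: "v \<in> Vs R n \<Longrightarrow> vadd R (vzero R) v = v"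
  by (rule ext) (simp add: vadd_def vzero_def Vs_carrier)

lemma Vs_subspace: "subspace_of R n (Vs R n)"
  unfolding subspace_of_def by auto

lemma finite_Vs:
  assumes "finite (carrier R)"
  shows "finite (Vs R n)"
proof -
  have "Vs R n = {v. \<forall>j. (j \<in> {..<n} \<longrightarrow> v j \<in> carrier R) \<and> (j \<notin> {..<n} \<longrightarrow> v j = \<zero>)}"
    unfolding Vs_def lessThan_iff not_less by blast
  then show ?thesis
    using finite_set_of_finite_funs[OF finite_lessThan assms] by (simp only:)
qed

lemma lincomb_Cons:
  assumes "c \<in> carrier R" "set cs \<subseteq> carrier R" "v \<in> Vs R n" "set vs \<subseteq> Vs R n"
    "length cs = length vs"
  shows "lincomb R (c # cs) (v # vs) = vadd R (vsmult R c v) (lincomb R cs vs)"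
proof
  fix j
  let ?f = "\<lambda>k. ((c # cs) ! k) \<otimes> (((v # vs) ! k) j)"
  have "cs ! k \<otimes> (vs ! k) j \<in> carrier R" if "k < length vs" for k
    using assms that by (metis Vs_carrier m_closed nth_mem subsetD)
  then have f: "?f \<in> insert 0 (Suc ` {..<length vs}) \<rightarrow> carrier R"
    using assms by (auto simp: Vs_carrier)
  have "finsum R ?f {..<length (v # vs)} = ?f 0 \<oplus> finsum R ?f (Suc ` {..<length vs})"
    unfolding length_Cons lessThan_Suc_eq_insert_0 using f by (intro finsum_insert) auto
  also have "finsum R ?f (Suc ` {..<length vs}) = finsum R (\<lambda>k. ?f (Suc k)) {..<length vs}"
    using f by (intro finsum_reindex) auto
  finally show "lincomb R (c # cs) (v # vs) j = vadd R (vsmult R c v) (lincomb R cs vs) j"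
    unfolding lincomb_def vadd_def vsmult_def by simp
qed

lemma lincomb_in_subspace:
  assumes U: "subspace_of R n U"
  shows "set vs \<subseteq> U \<Longrightarrow> set cs \<subseteq> carrier R \<Longrightarrow> length cs = length vs \<Longrightarrow> lincomb R cs vs \<in> U"
proof (induction vs arbitrary: cs)
  case Nil
  then show ?case using U by (simp add: subspace_of_def lincomb_def vzero_def)
next
  case (Cons v vs)
  then obtain c cs' where cs: "cs = c # cs'" by (cases cs) auto
  have "U \<subseteq> Vs R n" using U by (simp add: subspace_of_def)
  then have "lincomb R cs (v # vs) = vadd R (vsmult R c v) (lincomb R cs' vs)"
    unfolding cs using Cons.prems cs by (intro lincomb_Cons[where n = n]) auto
  moreover have "lincomb R cs' vs \<in> U" using Cons cs by simp
  ultimately show ?case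
    using Cons.prems cs U by (simp add: subspace_of_def)
qed

lemma lincomb_in_Vs:
  "set vs \<subseteq> Vs R n \<Longrightarrow> set cs \<subseteq> carrier R \<Longrightarrow> length cs = length vs \<Longrightarrow> lincomb R cs vs \<in> Vs R n"
  by (rule lincomb_in_subspace[OF Vs_subspace])

lemma span_minimal: "subspace_of R n U \<Longrightarrow> set vs \<subseteq> U \<Longrightarrow> span R vs \<subseteq> U"
  unfolding span_def using lincomb_in_subspace by blast

lemma span_subset_Vs: "set vs \<subseteq> Vs R n \<Longrightarrow> span R vs \<subseteq> Vs R n"
  by (rule span_minimal[OF Vs_subspace])


lemma lincomb_add:
  assumes "set cs \<subseteq> carrier R" "set ds \<subseteq> carrier R" "set vs \<subseteq> Vs R n"
    "length cs = length vs" "length ds = length vs"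
  shows "lincomb R (map2 (\<oplus>) cs ds) vs = vadd R (lincomb R cs vs) (lincomb R ds vs)"
proof
  fix j
  let ?c = "\<lambda>k. cs ! k \<otimes> (vs ! k) j" and ?d = "\<lambda>k. ds ! k \<otimes> (vs ! k) j"
  have carr: "cs ! k \<in> carrier R" "ds ! k \<in> carrier R" "(vs ! k) j \<in> carrier R"
    if "k < length vs" for k
    using assms that by (metis Vs_carrier nth_mem subsetD)+
  have "lincomb R (map2 (\<oplus>) cs ds) vs j = (\<Oplus>k\<in>{..<length vs}. ?c k \<oplus> ?d k)"
    unfolding lincomb_def using assms(4,5) carr by (intro finsum_cong) (auto simp: l_distr)
  also have "\<dots> = vadd R (lincomb R cs vs) (lincomb R ds vs) j"
    unfolding lincomb_def vadd_def using carr by (intro finsum_addf) auto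
  finally show "lincomb R (map2 (\<oplus>) cs ds) vs j = vadd R (lincomb R cs vs) (lincomb R ds vs) j" .
qed

lemma lincomb_smult:
  assumes "d \<in> carrier R" "set cs \<subseteq> carrier R" "set vs \<subseteq> Vs R n" "length cs = length vs"
  shows "lincomb R (map ((\<otimes>) d) cs) vs = vsmult R d (lincomb R cs vs)"
proof
  fix j
  have carr: "cs ! k \<in> carrier R" "(vs ! k) j \<in> carrier R" if "k < length vs" for k
    using assms that by (metis Vs_carrier nth_mem subsetD)+
  have "lincomb R (map ((\<otimes>) d) cs) vs j = (\<Oplus>k\<in>{..<length vs}. d \<otimes> (cs ! k \<otimes> (vs ! k) j))"
    unfolding lincomb_def using assms(1,4) carr by (intro finsum_cong) (auto simp: m_assoc)
  also have "\<dots> = vsmult R d (lincomb R cs vs) j"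
    unfolding lincomb_def vsmult_def using assms(1) carr by (intro finsum_rdistr[symmetric]) auto
  finally show "lincomb R (map ((\<otimes>) d) cs) vs j = vsmult R d (lincomb R cs vs) j" .
qed

lemma inj_on_lincomb:
  assumes indep: "lin_indep R vs" and vs: "set vs \<subseteq> Vs R n"
  shows "inj_on (\<lambda>cs. lincomb R cs vs) {cs. set cs \<subseteq> carrier R \<and> length cs = length vs}"
proof (rule inj_onI, clarify)
  fix cs ds
  assume cs: "set cs \<subseteq> carrier R" "length cs = length vs"
    and ds: "set ds \<subseteq> carrier R" "length ds = length vs"
    and eq: "lincomb R cs vs = lincomb R ds vs"
  let ?x = "lincomb R cs vs" and ?es = "map2 (\<oplus>) cs (map ((\<otimes>) (\<ominus> \<one>)) ds)"
  have x: "?x \<in> Vs R n" using lincomb_in_Vs[OF vs cs] .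
  have coeffs: "cs ! k \<in> carrier R" "ds ! k \<in> carrier R" if "k < length vs" for k
    using cs ds that by (metis nth_mem subsetD)+
  then have es: "set ?es \<subseteq> carrier R" "length ?es = length vs"
    using cs ds by (auto simp: set_zip)
  have "lincomb R ?es vs = vadd R ?x (lincomb R (map ((\<otimes>) (\<ominus> \<one>)) ds) vs)"
    using cs ds vs by (intro lincomb_add[where n = n]) auto
  also have "\<dots> = vadd R ?x (vsmult R (\<ominus> \<one>) ?x)"
    using lincomb_smult[OF _ ds(1) vs ds(2)] eq by simp
  also have "\<dots> = vzero R"
    using Vs_carrier[OF x] by (auto simp: vadd_def vsmult_def vzero_def l_minus r_neg)
  finally have "\<forall>e\<in>set ?es. e = \<zero>" using indep es unfolding lin_indep_def by blast
  then have "cs ! k = ds ! k" if k: "k < length vs" for k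
  proof -
    have "?es ! k \<in> set ?es" using es(2) k by (intro nth_mem) simp
    then have "?es ! k = \<zero>" using \<open>\<forall>e\<in>set ?es. e = \<zero>\<close> by blast
    then have "cs ! k \<oplus> \<ominus> (ds ! k) = \<zero>" using k cs(2) ds(2) coeffs[OF k] by (simp add: l_minus)
    then show ?thesis
      using minus_equality[of "cs ! k" "\<ominus> (ds ! k)"] minus_minus[of "ds ! k"] coeffs[OF k] by simp
  qed
  then show "cs = ds" using cs ds by (simp add: nth_equalityI)
qed

lemma card_span:
  assumes "finite (carrier R)" "lin_indep R vs" "set vs \<subseteq> Vs R n"
  shows "card (span R vs) = card (carrier R) ^ length vs"
proof -
  have "span R vs = (\<lambda>cs. lincomb R cs vs) ` {cs. set cs \<subseteq> carrier R \<and> length cs = length vs}"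
    unfolding span_def by blast
  then show ?thesis
    using card_image[OF inj_on_lincomb[OF assms(2,3)]] card_lists_length_eq[OF assms(1)] by simp
qed

lemma subspace_coordinate_hyperplane:
  "subspace_of R n U \<Longrightarrow> subspace_of R n {u \<in> U. u j = \<zero>}"
  unfolding subspace_of_def by (auto simp: vzero_def vadd_def vsmult_def Vs_carrier subset_iff)

lemma bij_betw_coordinate_hyperplane:
  assumes U: "subspace_of R n U" and w: "w \<in> U" "w j = \<one>"
  shows "bij_betw (\<lambda>(a, h). vadd R h (vsmult R a w)) (carrier R \<times> {u \<in> U. u j = \<zero>}) U"
proof (rule bij_betw_imageI)
  have UV: "U \<subseteq> Vs R n" using U by (simp add: subspace_of_def)
  then have wV: "w \<in> Vs R n" using w by blast
  show "inj_on (\<lambda>(a, h). vadd R h (vsmult R a w)) (carrier R \<times> {u \<in> U. u j = \<zero>})"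
  proof (rule inj_onI, clarify)
    fix a h a' h'
    assume a: "a \<in> carrier R" "a' \<in> carrier R" and h: "h \<in> U" "h' \<in> U" "h j = \<zero>" "h' j = \<zero>"
      and eq: "vadd R h (vsmult R a w) = vadd R h' (vsmult R a' w)"
    have pointwise: "h k \<oplus> a \<otimes> w k = h' k \<oplus> a' \<otimes> w k" for k
      using fun_cong[OF eq, of k] by (simp add: vadd_def vsmult_def)
    have "a = a'" using pointwise[of j] a h w by simp
    moreover have "h = h'"
    proof
      fix k
      show "h k = h' k"
        using pointwise[of k] \<open>a = a'\<close> a h UV Vs_carrier[OF wV, of k] Vs_carrier[of h n k] Vs_carrier[of h' n k]
        by (metis add.right_cancel m_closed subsetD)
    qed
    ultimately show "a = a' \<and> h = h'" by simp
  qed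
  show "(\<lambda>(a, h). vadd R h (vsmult R a w)) ` (carrier R \<times> {u \<in> U. u j = \<zero>}) = U"
  proof
    show "(\<lambda>(a, h). vadd R h (vsmult R a w)) ` (carrier R \<times> {u \<in> U. u j = \<zero>}) \<subseteq> U"
      using U w by (auto simp: subspace_of_def)
  next
    show "U \<subseteq> (\<lambda>(a, h). vadd R h (vsmult R a w)) ` (carrier R \<times> {u \<in> U. u j = \<zero>})"
    proof
      fix u assume u: "u \<in> U"
      then have uV: "u \<in> Vs R n" using UV by blast
      let ?a = "u j" and ?h = "vadd R u (vsmult R (\<ominus> u j) w)"
      have a: "?a \<in> carrier R" using Vs_carrier[OF uV] .
      have "?h \<in> U" using U u w a by (simp add: subspace_of_def)
      moreover have "?h j = \<zero>" using a w by (simp add: vadd_def vsmult_def r_neg)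
      moreover have "vadd R ?h (vsmult R ?a w) = u"
      proof
        fix k
        show "vadd R ?h (vsmult R ?a w) k = u k"
          using a Vs_carrier[OF uV, of k] Vs_carrier[OF wV, of k]
          by (simp add: vadd_def vsmult_def a_assoc l_minus l_neg)
      qed
      ultimately show "u \<in> (\<lambda>(a, h). vadd R h (vsmult R a w)) ` (carrier R \<times> {u \<in> U. u j = \<zero>})"
        using a by force
    qed
  qed
qed

end

context field
begin

lemma lin_indep_Cons:
  assumes indep: "lin_indep R vs" and vs: "set vs \<subseteq> Vs R n"
    and v: "v \<in> Vs R n" "v \<notin> span R vs"
  shows "lin_indep R (v # vs)"
  unfolding lin_indep_def
proof (intro allI impI)
  fix cs'
  assume cs': "length cs' = length (v # vs) \<and> set cs' \<subseteq> carrier R \<and> lincomb R cs' (v # vs) = vzero R"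
  then obtain c cs where cc: "cs' = c # cs" by (cases cs') auto
  let ?l = "lincomb R cs vs"
  have c: "c \<in> carrier R" "set cs \<subseteq> carrier R" "length cs = length vs" using cs' cc by auto
  have l: "?l \<in> Vs R n" using lincomb_in_Vs[OF vs c(2,3)] .
  have comb: "vadd R (vsmult R c v) ?l = vzero R"
    using cs' cc c vs v by (simp add: lincomb_Cons[where n = n])
  have "c = \<zero>"
  proof (rule ccontr)
    assume "c \<noteq> \<zero>"
    then have inv: "inv c \<in> carrier R" "inv c \<otimes> c = \<one>" using c field_Units by auto
    have "v = vsmult R (\<ominus> (inv c)) ?l"
    proof
      fix j
      have "c \<otimes> v j \<oplus> ?l j = \<zero>" using fun_cong[OF comb, of j] by (simp add: vadd_def vsmult_def vzero_def)
      then have "c \<otimes> v j = \<ominus> ?l j"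
        using c Vs_carrier[OF v(1)] Vs_carrier[OF l] by (metis m_closed minus_equality)
      then have "inv c \<otimes> (c \<otimes> v j) = inv c \<otimes> (\<ominus> ?l j)" by simp
      then show "v j = vsmult R (\<ominus> (inv c)) ?l j"
        using inv c Vs_carrier[OF v(1)] Vs_carrier[OF l]
        by (simp add: vsmult_def m_assoc[symmetric] r_minus l_minus)
    qed
    also have "\<dots> = lincomb R (map ((\<otimes>) (\<ominus> (inv c))) cs) vs"
      using lincomb_smult[OF _ c(2) vs c(3)] inv by simp
    also have "\<dots> \<in> span R vs"
      unfolding span_def using inv(1) c(2,3) by (intro CollectI exI[of _ "map ((\<otimes>) (\<ominus> (inv c))) cs"]) auto
    finally show False using v(2) by contradiction
  qed
  then have "?l = vzero R" using comb l v(1) by simp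
  then show "\<forall>x\<in>set cs'. x = \<zero>"
    using indep c cc \<open>c = \<zero>\<close> unfolding lin_indep_def by auto
qed

lemma two_le_card_carrier: "finite (carrier R) \<Longrightarrow> 2 \<le> card (carrier R)"
  using card_mono[of "carrier R" "{\<zero>, \<one>}"] by simp

lemma length_lin_indep_less:
  assumes fin: "finite (carrier R)" and vs: "set vs \<subseteq> Vs R n" and indep: "lin_indep R vs"
  shows "length vs < card (Vs R n)"
proof -
  have "length vs < 2 ^ length vs" by (rule less_exp)
  also have "\<dots> \<le> card (carrier R) ^ length vs"
    using two_le_card_carrier[OF fin] by (rule power_mono) simp
  also have "\<dots> = card (span R vs)" using card_span[OF fin indep vs] by simp
  also have "\<dots> \<le> card (Vs R n)"
    using span_subset_Vs[OF vs] finite_Vs[OF fin] by (rule card_mono[rotated])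
  finally show ?thesis .
qed

lemma subspace_basis:
  assumes fin: "finite (carrier R)" and U: "subspace_of R n U"
  obtains vs where "set vs \<subseteq> U" "lin_indep R vs" "span R vs = U" "length vs = vdim R U"
proof -
  let ?S = "{length vs | vs. set vs \<subseteq> U \<and> lin_indep R vs}"
  have UV: "U \<subseteq> Vs R n" using U by (simp add: subspace_of_def)
  have "?S \<subseteq> {..<card (Vs R n)}" using length_lin_indep_less[OF fin] UV by fastforce
  then have "finite ?S" by (rule finite_subset) simp
  moreover have "length [] \<in> ?S" by (fastforce simp: lin_indep_def lincomb_def)
  ultimately have "Max ?S \<in> ?S" using Max_in by blast
  then obtain vs where vs: "set vs \<subseteq> U" "lin_indep R vs" "length vs = vdim R U"
    unfolding vdim_def by auto
  have "U \<subseteq> span R vs"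
  proof
    fix u assume u: "u \<in> U"
    show "u \<in> span R vs"
    proof (rule ccontr)
      assume "u \<notin> span R vs"
      then have "lin_indep R (u # vs)" using lin_indep_Cons[OF vs(2)] vs(1) u UV by blast
      then have "length (u # vs) \<in> ?S" using u vs(1) by fastforce
      then have "length (u # vs) \<le> vdim R U" unfolding vdim_def using Max_ge[OF \<open>finite ?S\<close>] by blast
      then show False using vs(3) by simp
    qed
  qed
  then have "span R vs = U" using span_minimal[OF U vs(1)] by blast
  then show thesis using that vs by blast
qed

lemma card_subspace:
  assumes "finite (carrier R)" "subspace_of R n U"
  shows "card U = card (carrier R) ^ vdim R U"
proof -
  obtain vs where vs: "set vs \<subseteq> U" "lin_indep R vs" "span R vs = U" "length vs = vdim R U"
    using subspace_basis[OF assms] .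
  moreover have "set vs \<subseteq> Vs R n" using vs(1) assms(2) by (auto simp: subspace_of_def)
  ultimately show ?thesis using card_span[OF assms(1)] by metis
qed

lemma vdim_coordinate_hyperplane:
  assumes fin: "finite (carrier R)" and U: "subspace_of R n U" and w: "w \<in> U" "w j = \<one>"
  shows "vdim R U = Suc (vdim R {u \<in> U. u j = \<zero>})"
proof -
  let ?q = "card (carrier R)" and ?H = "{u \<in> U. u j = \<zero>}"
  have "?q ^ vdim R U = card U" using card_subspace[OF fin U] by simp
  also have "\<dots> = card (carrier R \<times> ?H)"
    using bij_betw_coordinate_hyperplane[OF U w] by (simp add: bij_betw_same_card)
  also have "\<dots> = ?q ^ Suc (vdim R ?H)"
    using card_subspace[OF fin subspace_coordinate_hyperplane[OF U]] by (simp add: card_cartesian_product)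
  finally have "?q ^ vdim R U = ?q ^ Suc (vdim R ?H)" .
  moreover have "1 < ?q" using two_le_card_carrier[OF fin] by simp
  ultimately show ?thesis by (simp only: power_inject_exp)
qed

lemma subspace_coordinate_one:
  assumes fin: "finite (carrier R)" and U: "subspace_of R n U" and "0 < vdim R U"
  obtains w j where "w \<in> U" "w j = \<one>"
proof -
  have "2 \<le> card (carrier R)" using two_le_card_carrier[OF fin] .
  also have "\<dots> \<le> card U"
    using card_subspace[OF fin U] self_le_power[of "card (carrier R)" "vdim R U"]
      \<open>2 \<le> card (carrier R)\<close> \<open>0 < vdim R U\<close>
    by simp
  finally have "\<not> U \<subseteq> {vzero R}" using card_mono[of "{vzero R}" U] by fastforce
  then obtain u where u: "u \<in> U" "u \<noteq> vzero R" by blast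
  then obtain j where uj: "u j \<noteq> \<zero>" unfolding vzero_def by auto
  have "u j \<in> carrier R" using u U Vs_carrier by (auto simp: subspace_of_def)
  then have "inv (u j) \<in> carrier R" "inv (u j) \<otimes> u j = \<one>" using uj field_Units by auto
  then have "vsmult R (inv (u j)) u \<in> U" "vsmult R (inv (u j)) u j = \<one>"
    using U u by (auto simp: subspace_of_def vsmult_def)
  then show thesis by (rule that)
qed

end

lemma finite_Psp:
  assumes "\<And>i. i < l \<Longrightarrow> ring (K i) \<and> finite (carrier (K i))"
  shows "finite (Psp l K n)"
proof -
  let ?B = "Pow (\<Union>i<l. Vs (K i) (n i))"
  have "finite (Vs (K i) (n i))" if "i < l" for i
    using assms[OF that] ring.finite_Vs by blast
  then have "finite ?B" by simp
  moreover have "Psp l K n \<subseteq> {L. \<forall>i. (i \<in> {..<l} \<longrightarrow> L i \<in> ?B) \<and> (i \<notin> {..<l} \<longrightarrow> L i = {})}"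
  proof
    fix L assume "L \<in> Psp l K n"
    then have "\<forall>i<l. L i \<subseteq> Vs (K i) (n i)" "\<forall>i\<ge>l. L i = {}"
      by (auto simp: Psp_def subspace_of_def)
    then show "L \<in> {L. \<forall>i. (i \<in> {..<l} \<longrightarrow> L i \<in> ?B) \<and> (i \<notin> {..<l} \<longrightarrow> L i = {})}"
      by fastforce
  qed
  ultimately show ?thesis
    by (rule finite_subset[rotated, OF finite_set_of_finite_funs[OF finite_lessThan]])
qed

lemma Ltop_in_Psp: "(\<And>i. i < l \<Longrightarrow> ring (K i)) \<Longrightarrow> Ltop l K n \<in> Psp l K n"
  unfolding Psp_def Ltop_def using ring.Vs_subspace by auto

lemma Psp_lower_cover:
  assumes fields: "\<And>i. i < l \<Longrightarrow> field (K i) \<and> finite (carrier (K i))"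
    and L: "L \<in> Psp l K n" and "0 < Rk l K L"
  obtains L' where "L' \<in> Psp l K n" "Lsubseteq l L' L" "Suc (Rk l K L') = Rk l K L"
proof -
  have "Rk l K L \<noteq> 0" using \<open>0 < Rk l K L\<close> by simp
  then obtain i where i: "i < l" "0 < vdim (K i) (L i)" unfolding Rk_def by auto
  have field: "field (K i)" "finite (carrier (K i))" using fields i(1) by auto
  have U: "subspace_of (K i) (n i) (L i)" using L i(1) by (simp add: Psp_def)
  obtain w j where w: "w \<in> L i" "w j = \<one>\<^bsub>K i\<^esub>"
    using field.subspace_coordinate_one[OF field U i(2)] .
  let ?H = "{u \<in> L i. u j = \<zero>\<^bsub>K i\<^esub>}"
  let ?L' = "L(i := ?H)"
  have "?L' \<in> Psp l K n"
    using L i(1) ring.subspace_coordinate_hyperplane[OF field.is_ring[OF field(1)] U]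
    by (simp add: Psp_def)
  moreover have "Lsubseteq l ?L' L" by (simp add: Lsubseteq_def)
  moreover have "Suc (Rk l K ?L') = Rk l K L"
  proof -
    have "Rk l K ?L' = vdim (K i) ?H + (\<Sum>k\<in>{..<l} - {i}. vdim (K k) (L k))"
      unfolding Rk_def using i(1) by (simp add: sum.remove)
    moreover have "Rk l K L = vdim (K i) (L i) + (\<Sum>k\<in>{..<l} - {i}. vdim (K k) (L k))"
      unfolding Rk_def using i(1) by (simp add: sum.remove)
    ultimately show ?thesis
      using field.vdim_coordinate_hyperplane[OF field U w] by simp
  qed
  ultimately show thesis by (rule that)
qed

theorem mainTheorem7:
  fixes l :: nat and K :: "nat \<Rightarrow> ('a, 'b) ring_scheme" and n :: "nat \<Rightarrow> nat"
    and rho :: "(nat \<Rightarrow> (nat \<Rightarrow> 'a) set) \<Rightarrow> nat"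
  assumes "sum_matroid l K n rho"
    and "1 \<le> i" and "i \<le> nullity l K rho (Ltop l K n)"
  shows "Min {Rk l K L | L. L \<in> Psp l K n \<and> nullity l K rho L = i}
       = Min {Rk l K L | L. L \<in> Psp l K n \<and> nullity l K rho L \<ge> i}"
proof (rule Min_level_eq_Min_superlevel)
  have fields: "\<And>k. k < l \<Longrightarrow> field (K k) \<and> finite (carrier (K k))"
    and mono: "\<And>L L'. L \<in> Psp l K n \<Longrightarrow> L' \<in> Psp l K n \<Longrightarrow> Lsubseteq l L L' \<Longrightarrow> rho L \<le> rho L'"
    using assms(1) unfolding sum_matroid_def by auto
  then have rings: "\<And>k. k < l \<Longrightarrow> ring (K k) \<and> finite (carrier (K k))"
    using field.is_ring by blast
  show "finite (Psp l K n)" using finite_Psp[OF rings] .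
  show "Ltop l K n \<in> Psp l K n" using Ltop_in_Psp rings by blast
  show "i \<le> nullity l K rho (Ltop l K n)" by fact
  fix L assume L: "L \<in> Psp l K n" and "i < nullity l K rho L"
  \<comment> \<open>this already forces Rk L > 0\<close>
  then have "0 < Rk l K L" by (simp add: nullity_def)
  then obtain L' where L': "L' \<in> Psp l K n" "Lsubseteq l L' L" "Suc (Rk l K L') = Rk l K L"
    using Psp_lower_cover[OF fields L] by blast
  have "rho L' \<le> rho L" using mono[OF L'(1) L L'(2)] .
  then have "i \<le> nullity l K rho L'"
    using \<open>i < nullity l K rho L\<close> L'(3) by (simp add: nullity_def)
  then show "\<exists>L'\<in>Psp l K n. Rk l K L' < Rk l K L \<and> i \<le> nullity l K rho L'"
    using L' by force
qed

end
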